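(* Let $1\le n<N$. Then for all $\epsilon>0$, \[ \Pr\Big(\max_{n\le k\le N-1}\frac{\sum_{t=1}^k (X_t-\mu)}{k}\ge \epsilon\Big)\le \exp\Big(-\frac{2n\epsilon^2}{(1-n/N)(1+1/n)(b-a)^2}\Big), \] and \[ \Pr\Big(\max_{1\le k\le n}\frac{\sum_{t=1}^k (X_t-\mu)}{N-k}\ge \frac{n\epsilon}{N-n}\Big)\le \exp\Big(-\frac{2n\epsilon^2}{(1-(n-1)/N)(b-a)^2}\Big). \]
   Context: Let $N\ge 2$ and let $\mathcal X=(x_1,\dots,x_N)$ be a finite population of real numbers (repetitions allowed). Let $(X_1,\dots,X_N)=(x_{\pi(1)},\dots,x_{\pi(N)})$, where $\pi$ is a uniformly random permutation of $\{1,\dots,N\}$. For $n\le N$, $(X_1,\dots,X_n)$ is therefore a sample of size $n$ drawn uniformly without replacement from $\mathcal X$. Let $\mu=\frac1N\sum_{i=1}^N x_i$, $a=\min_i x_i$ and $b=\max_i x_i$. *)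

theory Defs
  imports "HOL-Probability.Probability"
begin

text \<open>Uniform distribution on the permutations of the index set {1..N}.
  A permutation pi gives the random sequence X_t = x (pi t), t = 1..N.\<close>
definition perm_pmf :: "nat \<Rightarrow> (nat \<Rightarrow> nat) pmf" where
  "perm_pmf N = pmf_of_set {\<pi>. \<pi> permutes {1..N}}"

definition centred_sum :: "(nat \<Rightarrow> real) \<Rightarrow> real \<Rightarrow> (nat \<Rightarrow> nat) \<Rightarrow> nat \<Rightarrow> real" where
  "centred_sum x \<mu> \<pi> k = (\<Sum>t=1..k. x (\<pi> t) - \<mu>)"

end

theory Submission
  imports Defs
begin

(*
  Let xs be a uniformly random arrangement of a finite population A with mean m and values
  in [a, b], and let
  M_i = (\<Sum>t<i. xs!t - m) / (|A| - i), which is m minus the mean of the elements not yet drawn.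
  Conditioned on the first draw, the remaining arrangement is again uniform, and M moves by
  (xs!0 - m) / (|A| - 1) before restarting on the smaller population; Hoeffding's lemma bounds
  the exponential moment of that step by exp (L\<^sup>2 (b - a)\<^sup>2 / (8 (|A| - 1)\<^sup>2)).
  Induction on the horizon j therefore gives the maximal inequality
    P(max_{i\<le>j} M_i \<ge> c) \<le> exp (- L c + L\<^sup>2 (b - a)\<^sup>2 / 8 * \<Sum>i=1..j. 1 / (|A| - i)\<^sup>2),
  and optimising L and bounding the sum by telescoping yields the second inequality (j = n).
  For the first one, the first k draws sum to minus the last N - k, so read backwards the
  sample mean deviation at time k is the process M of the negated population at time N - k;
  the same bound with j = N - n applies.
*)

definition mean :: "('a \<Rightarrow> real) \<Rightarrow> 'a set \<Rightarrow> real" where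
  "mean y A = (\<Sum>a\<in>A. y a) / card A"

definition deviation_crosses :: "('a \<Rightarrow> real) \<Rightarrow> 'a set \<Rightarrow> nat \<Rightarrow> real \<Rightarrow> 'a list \<Rightarrow> bool" where
  "deviation_crosses y A j c xs \<longleftrightarrow>
    (\<exists>i\<in>{1..j}. c \<le> (\<Sum>v\<leftarrow>take i xs. y v - mean y A) / (real (card A) - real i))"

lemma prob_permutations_of_set_Cons:
  assumes "finite A" and "A \<noteq> {}"
  shows "measure_pmf.prob (pmf_of_set (permutations_of_set A)) {xs. Q xs} =
    (\<Sum>a\<in>A. measure_pmf.prob (pmf_of_set (permutations_of_set (A - {a}))) {xs. Q (a # xs)}) / card A"
proof -
  have "measure_pmf.prob (pmf_of_set (permutations_of_set A)) {xs. Q xs} =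
    measure_pmf.expectation (pmf_of_set A)
      (\<lambda>a. measure_pmf.prob (map_pmf ((#) a) (pmf_of_set (permutations_of_set (A - {a})))) {xs. Q xs})"
    unfolding random_permutation_of_set[OF assms] map_pmf_def[symmetric] measure_pmf_bind
    by (rule measure_pmf.measure_bind[where N = "count_space UNIV"])
      (auto simp: space_subprob_algebra measure_pmf.subprob_space_axioms)
  also have "\<dots> = (\<Sum>a\<in>A. measure_pmf.prob (pmf_of_set (permutations_of_set (A - {a}))) {xs. Q (a # xs)}) / card A"
    using assms by (simp add: integral_pmf_of_set vimage_def)
  finally show ?thesis .
qed

lemma Hoeffdings_lemma_mean:
  fixes y :: "'a \<Rightarrow> real"
  assumes "finite A" and "A \<noteq> {}" and "\<And>a. a \<in> A \<Longrightarrow> y a \<in> {lo..hi}" and "l > 0"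
  shows "mean (\<lambda>a. exp (l * (y a - mean y A))) A \<le> exp (l\<^sup>2 * (hi - lo)\<^sup>2 / 8)"
proof -
  let ?M = "measure_pmf (pmf_of_set A)"
  interpret interval_bounded_random_variable ?M y lo hi
    by unfold_locales (use assms in \<open>auto simp: AE_measure_pmf_iff\<close>)
  have "nn_integral ?M (\<lambda>a. exp (l * (y a - mean y A))) \<le> ennreal (exp (l\<^sup>2 * (hi - lo)\<^sup>2 / 8))"
    using Hoeffdings_lemma_nn_integral[OF \<open>l > 0\<close>]
    by (simp add: integral_pmf_of_set assms mean_def)
  also have "nn_integral ?M (\<lambda>a. exp (l * (y a - mean y A))) =
      ennreal (mean (\<lambda>a. exp (l * (y a - mean y A))) A)"
    using assms by (simp add: nn_integral_pmf_of_set mean_def divide_ennreal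
        ennreal_of_nat_eq_real_of_nat sum_nonneg card_gt_0_iff)
  finally show ?thesis
    by simp
qed

lemma deviation_take_Cons:
  fixes y :: "'a \<Rightarrow> real"
  assumes "finite A" and "a \<in> A" and "i \<le> length xs" and "Suc i < card A"
  shows "(\<Sum>v\<leftarrow>take (Suc i) (a # xs). y v - mean y A) / (real (card A) - real (Suc i)) =
    (y a - mean y A) / (real (card A) - 1) +
    (\<Sum>v\<leftarrow>take i xs. y v - mean y (A - {a})) / (real (card A) - 1 - real i)"
proof -
  define d where "d = real (card A) - 1"
  have d_pos: "d > 0" and d_i: "d - real i > 0"
    using assms(4) by (auto simp: d_def)
  have card_A: "real (card A) = d + 1" by (simp add: d_def)
  have card_Diff: "real (card (A - {a})) = d"
    using assms(1,2,4) by (simp add: d_def card_Diff_singleton of_nat_diff)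
  have sum_Diff: "(\<Sum>v\<in>A - {a}. y v) = (\<Sum>v\<in>A. y v) - y a"
    using assms(1,2) by (simp add: sum_diff1)
  have mean_Diff: "mean y (A - {a}) = mean y A - (y a - mean y A) / d"
    using d_pos unfolding mean_def card_Diff card_A sum_Diff
    by (simp add: divide_simps) (simp add: algebra_simps)
  define S where "S = (\<Sum>v\<leftarrow>take i xs. y v)"
  have sum_take: "(\<Sum>v\<leftarrow>take i xs. y v - m) = S - real i * m" for m
    using assms(3) by (simp add: S_def sum_list_subtractf sum_list_triv min_def)
  have "real (card A) - real (Suc i) = d - real i"
    by (simp add: card_A)
  then show ?thesis
    using d_pos d_i unfolding d_def[symmetric] take_Suc_Cons list.map sum_list.Cons
      sum_take mean_Diff
    by (simp add: field_simps)
qed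

lemma deviation_crosses_Cons:
  fixes y :: "'a \<Rightarrow> real"
  assumes "finite A" and "a \<in> A" and "length xs = card A - 1" and "Suc j < card A"
  defines "dev \<equiv> (y a - mean y A) / (real (card A) - 1)"
  shows "deviation_crosses y A (Suc j) c (a # xs) \<longleftrightarrow>
    c \<le> dev \<or> deviation_crosses y (A - {a}) j (c - dev) xs"
proof -
  have card_Diff: "real (card (A - {a})) = real (card A) - 1"
    using assms(1,2,4) by (simp add: card_Diff_singleton of_nat_diff)
  have step: "c \<le> (\<Sum>v\<leftarrow>take (Suc i) (a # xs). y v - mean y A) / (real (card A) - real (Suc i))
      \<longleftrightarrow> c - dev \<le> (\<Sum>v\<leftarrow>take i xs. y v - mean y (A - {a})) / (real (card (A - {a})) - real i)"
    if "i \<le> j" for i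
    using that assms(3,4) deviation_take_Cons[OF assms(1,2), of i xs y]
    by (simp add: dev_def card_Diff diff_le_eq add.commute)
  have shift: "(\<exists>i\<in>{1..Suc j}. P i) \<longleftrightarrow> P 1 \<or> (\<exists>i\<in>{1..j}. P (Suc i))"
    for P :: "nat \<Rightarrow> bool"
    by (metis atLeastAtMost_iff Suc_le_mono One_nat_def le0 not0_implies_Suc not_less_eq_eq)
  show ?thesis
    unfolding deviation_crosses_def shift using step[of 0] step by (auto simp: One_nat_def)
qed

lemma prob_deviation_crosses_Cons:
  fixes y :: "'a \<Rightarrow> real"
  assumes "finite A" and "Suc j < card A" and "a \<in> A"
  shows "measure_pmf.prob (pmf_of_set (permutations_of_set (A - {a})))
      {xs. deviation_crosses y A (Suc j) c (a # xs)} =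
    measure_pmf.prob (pmf_of_set (permutations_of_set (A - {a})))
      {xs. c \<le> (y a - mean y A) / (real (card A) - 1) \<or>
        deviation_crosses y (A - {a}) j (c - (y a - mean y A) / (real (card A) - 1)) xs}"
proof (rule measure_pmf.finite_measure_eq_AE, rule AE_pmfI)
  fix xs assume "xs \<in> set_pmf (pmf_of_set (permutations_of_set (A - {a})))"
  then have "length xs = card A - 1"
    using assms by (simp add: length_finite_permutations_of_set)
  then show "(xs \<in> {xs. deviation_crosses y A (Suc j) c (a # xs)}) =
    (xs \<in> {xs. c \<le> (y a - mean y A) / (real (card A) - 1) \<or>
      deviation_crosses y (A - {a}) j (c - (y a - mean y A) / (real (card A) - 1)) xs})"
    using deviation_crosses_Cons[OF assms(1,3) _ assms(2)] by simp
qed simp_all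

lemma prob_permutations_exp_step:
  fixes y :: "'a \<Rightarrow> real"
  assumes "finite A" and "2 \<le> card A" and "\<And>a. a \<in> A \<Longrightarrow> y a \<in> {lo..hi}" and "L > 0"
    and first: "\<And>a. a \<in> A \<Longrightarrow>
      measure_pmf.prob (pmf_of_set (permutations_of_set (A - {a}))) {xs. Q (a # xs)}
        \<le> exp (- L * (c - (y a - mean y A) / (real (card A) - 1)) + C)"
  shows "measure_pmf.prob (pmf_of_set (permutations_of_set A)) {xs. Q xs}
    \<le> exp (- L * c + C + L\<^sup>2 * (hi - lo)\<^sup>2 / 8 / (real (card A) - 1)\<^sup>2)"
proof -
  define d where "d = real (card A) - 1"
  have "A \<noteq> {}" and "d > 0"
    using assms(2) by (auto simp: d_def)
  have "measure_pmf.prob (pmf_of_set (permutations_of_set A)) {xs. Q xs} =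
      (\<Sum>a\<in>A. measure_pmf.prob (pmf_of_set (permutations_of_set (A - {a}))) {xs. Q (a # xs)}) / card A"
    using assms(1) \<open>A \<noteq> {}\<close> by (rule prob_permutations_of_set_Cons)
  also have "\<dots> \<le> (\<Sum>a\<in>A. exp (- L * (c - (y a - mean y A) / d) + C)) / card A"
    unfolding d_def by (intro divide_right_mono sum_mono first) auto
  also have "\<dots> = exp (- L * c + C) * mean (\<lambda>a. exp ((L / d) * (y a - mean y A))) A"
  proof -
    have "exp (- L * (c - (y a - mean y A) / d) + C) =
        exp (- L * c + C) * exp ((L / d) * (y a - mean y A))" for a
      by (simp add: exp_add[symmetric] algebra_simps diff_divide_distrib)
    then show ?thesis
      by (simp add: mean_def sum_distrib_left)
  qed
  also have "\<dots> \<le> exp (- L * c + C) * exp ((L / d)\<^sup>2 * (hi - lo)\<^sup>2 / 8)"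
    using assms \<open>A \<noteq> {}\<close> \<open>d > 0\<close> by (intro mult_left_mono Hoeffdings_lemma_mean) auto
  also have "\<dots> = exp (- L * c + C + L\<^sup>2 * (hi - lo)\<^sup>2 / 8 / (real (card A) - 1)\<^sup>2)"
    by (simp add: d_def exp_add[symmetric] power_divide)
  finally show ?thesis .
qed

lemma sum_inverse_square_split_first:
  "(\<Sum>i=1..Suc j. 1 / (m - real i)\<^sup>2) = 1 / (m - 1)\<^sup>2 + (\<Sum>i=1..j. 1 / (m - 1 - real i)\<^sup>2)"
proof -
  have split: "(\<Sum>i=1..Suc j. f i) = f 1 + (\<Sum>i=1..j. f (Suc i))" for f :: "nat \<Rightarrow> real"
    by (metis One_nat_def le_add1 plus_1_eq_Suc sum.atLeast_Suc_atMost sum.shift_bounds_cl_Suc_ivl)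
  show ?thesis
    by (simp only: split) (simp add: diff_diff_add)
qed

lemma prob_permutations_max_deviation_le:
  fixes y :: "'a \<Rightarrow> real"
  assumes "finite A" and "j < card A" and "\<And>a. a \<in> A \<Longrightarrow> y a \<in> {lo..hi}" and "L > 0"
  shows "measure_pmf.prob (pmf_of_set (permutations_of_set A)) {xs. deviation_crosses y A j c xs}
    \<le> exp (- L * c + L\<^sup>2 * (hi - lo)\<^sup>2 / 8 * (\<Sum>i=1..j. 1 / (real (card A) - real i)\<^sup>2))"
  using assms(1-3)
proof (induction j arbitrary: A c)
  case 0
  then show ?case by (simp add: deviation_crosses_def)
next
  case (Suc j)
  define C where "C = L\<^sup>2 * (hi - lo)\<^sup>2 / 8 * (\<Sum>i=1..j. 1 / (real (card A) - 1 - real i)\<^sup>2)"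
  have "C \<ge> 0"
    unfolding C_def by (intro mult_nonneg_nonneg sum_nonneg) auto
  have "measure_pmf.prob (pmf_of_set (permutations_of_set A)) {xs. deviation_crosses y A (Suc j) c xs}
      \<le> exp (- L * c + C + L\<^sup>2 * (hi - lo)\<^sup>2 / 8 / (real (card A) - 1)\<^sup>2)"
  proof (rule prob_permutations_exp_step)
    fix a assume "a \<in> A"
    define dev where "dev = (y a - mean y A) / (real (card A) - 1)"
    let ?perms = "pmf_of_set (permutations_of_set (A - {a}))"
    have "measure_pmf.prob ?perms {xs. deviation_crosses y A (Suc j) c (a # xs)} =
        measure_pmf.prob ?perms {xs. c \<le> dev \<or> deviation_crosses y (A - {a}) j (c - dev) xs}"
      using Suc.prems(1,2) \<open>a \<in> A\<close> unfolding dev_def by (rule prob_deviation_crosses_Cons)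
    also have "\<dots> \<le> exp (- L * (c - dev) + C)"
    proof (cases "c \<le> dev")
      case True
      have "- L * (c - dev) \<ge> 0"
        using True \<open>L > 0\<close> by (simp add: mult_nonneg_nonpos)
      then have "1 \<le> exp (- L * (c - dev) + C)"
        using \<open>C \<ge> 0\<close> by simp
      then show ?thesis
        using measure_pmf.prob_le_1 order_trans by blast
    next
      case False
      then show ?thesis
        using Suc.IH[of "A - {a}" "c - dev"] Suc.prems \<open>a \<in> A\<close> by (simp add: C_def mult.assoc)
    qed
    finally show "measure_pmf.prob ?perms {xs. deviation_crosses y A (Suc j) c (a # xs)}
      \<le> exp (- L * (c - (y a - mean y A) / (real (card A) - 1)) + C)"
      by (simp add: dev_def)
  qed (use Suc.prems \<open>L > 0\<close> in auto)
  also have "\<dots> = exp (- L * c + L\<^sup>2 * (hi - lo)\<^sup>2 / 8 * (\<Sum>i=1..Suc j. 1 / (real (card A) - real i)\<^sup>2))"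
    by (simp only: sum_inverse_square_split_first) (simp add: C_def algebra_simps)
  finally show ?case .
qed

lemma sum_inverse_consecutive_products:
  "m < N \<Longrightarrow> (\<Sum>i=1..m. 1 / ((real N - real i) * (real N - real i + 1))) = 1 / (real N - real m) - 1 / real N"
proof (induction m)
  case (Suc m)
  have "1 / ((real N - real (Suc m)) * (real N - real (Suc m) + 1)) =
      1 / (real N - real (Suc m)) - 1 / (real N - real m)"
    using Suc.prems by (simp add: field_simps)
  then show ?case
    using Suc by simp
qed simp

lemma sum_inverse_square_le:
  assumes "m < N"
  shows "(\<Sum>i=1..m. 1 / (real N - real i)\<^sup>2) \<le> real m * (real N - real m + 1) / (real N * (real N - real m)\<^sup>2)"
proof -
  define r where "r = real N - real m"
  have "r \<ge> 1"
    using assms by (simp add: r_def)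
  have "(\<Sum>i=1..m. 1 / (real N - real i)\<^sup>2) \<le>
      (\<Sum>i=1..m. (r + 1) / r * (1 / ((real N - real i) * (real N - real i + 1))))"
  proof (rule sum_mono)
    fix i assume "i \<in> {1..m}"
    define p where "p = real N - real i"
    have "p \<ge> r"
      using \<open>i \<in> {1..m}\<close> by (simp add: p_def r_def)
    then have "r * (p * (p + 1)) \<le> (r + 1) * p\<^sup>2"
      using \<open>r \<ge> 1\<close> by (simp add: power2_eq_square algebra_simps mult_right_mono)
    then show "1 / (real N - real i)\<^sup>2 \<le> (r + 1) / r * (1 / ((real N - real i) * (real N - real i + 1)))"
      using \<open>r \<ge> 1\<close> \<open>p \<ge> r\<close> unfolding p_def[symmetric]
      by (simp add: divide_simps power2_eq_square mult.commute)
  qed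
  also have "\<dots> = (r + 1) / r * (1 / r - 1 / real N)"
    by (simp only: sum_distrib_left[symmetric] sum_inverse_consecutive_products[OF assms] r_def)
  also have "\<dots> = real m * (real N - real m + 1) / (real N * (real N - real m)\<^sup>2)"
    using \<open>r \<ge> 1\<close> assms by (simp add: r_def field_simps power2_eq_square)
  finally show ?thesis .
qed

lemma exp_bound_optimize:
  fixes P c D S B :: real
  assumes "c > 0" and "D \<ge> 0" and "S \<le> B" and "B > 0"
    and bound: "\<And>L. L > 0 \<Longrightarrow> P \<le> exp (- L * c + L\<^sup>2 * D / 8 * S)"
  shows "P \<le> exp (- (2 * c\<^sup>2 / (D * B)))"
proof (cases "D = 0")
  case True
  \<comment> \<open>then the right-hand side is exp 0 = 1, division by zero being 0\<close>
  then show ?thesis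
    using bound[of 1] \<open>c > 0\<close> by (simp add: order_trans)
next
  case False
  define L where "L = 4 * c / (D * B)"
  have "L > 0"
    using False assms by (simp add: L_def)
  have "- L * c + L\<^sup>2 * D / 8 * S \<le> - L * c + L\<^sup>2 * D / 8 * B"
    using assms by (simp add: mult_left_mono)
  also have "\<dots> = - (2 * c\<^sup>2 / (D * B))"
    using False \<open>B > 0\<close> by (simp add: L_def field_simps power2_eq_square)
  finally show ?thesis
    using bound[OF \<open>L > 0\<close>] by (meson exp_le_cancel_iff order_trans)
qed

lemma prob_permutations_max_deviation_exp_le:
  fixes y :: "'a \<Rightarrow> real"
  assumes "finite A" and "1 \<le> j" and "j < card A" and "\<And>a. a \<in> A \<Longrightarrow> y a \<in> {lo..hi}" and "c > 0"
  shows "measure_pmf.prob (pmf_of_set (permutations_of_set A)) {xs. deviation_crosses y A j c xs}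
    \<le> exp (- (2 * c\<^sup>2 / ((hi - lo)\<^sup>2 *
        (real j * (real (card A) - real j + 1) / (real (card A) * (real (card A) - real j)\<^sup>2)))))"
proof (rule exp_bound_optimize)
  show "(\<Sum>i=1..j. 1 / (real (card A) - real i)\<^sup>2)
    \<le> real j * (real (card A) - real j + 1) / (real (card A) * (real (card A) - real j)\<^sup>2)"
    using assms(3) by (rule sum_inverse_square_le)
  show "real j * (real (card A) - real j + 1) / (real (card A) * (real (card A) - real j)\<^sup>2) > 0"
    using assms(2,3) by simp
  show "measure_pmf.prob (pmf_of_set (permutations_of_set A)) {xs. deviation_crosses y A j c xs}
    \<le> exp (- L * c + L\<^sup>2 * (hi - lo)\<^sup>2 / 8 * (\<Sum>i=1..j. 1 / (real (card A) - real i)\<^sup>2))"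
    if "L > 0" for L
    using assms(1,3,4) that by (rule prob_permutations_max_deviation_le)
qed (use assms(5) in simp_all)

lemma map_pmf_permutes_eq_permutations_of_set:
  assumes "distinct ys"
  shows "map_pmf (\<lambda>\<pi>. map \<pi> ys) (pmf_of_set {\<pi>. \<pi> permutes set ys}) =
    pmf_of_set (permutations_of_set (set ys))"
proof -
  let ?P = "{\<pi>. \<pi> permutes set ys}"
  have ys: "ys \<in> permutations_of_set (set ys)"
    using assms by (rule permutations_of_setI[OF refl])
  have inj: "inj_on (\<lambda>\<pi>. map \<pi> ys) ?P"
  proof (rule inj_onI, rule ext)
    fix \<pi> \<sigma> v assume "\<pi> \<in> ?P" "\<sigma> \<in> ?P" "map \<pi> ys = map \<sigma> ys"
    then show "\<pi> v = \<sigma> v"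
      by (cases "v \<in> set ys") (auto simp: map_eq_conv permutes_not_in)
  qed
  have "(\<lambda>\<pi>. map \<pi> ys) ` ?P \<subseteq> permutations_of_set (set ys)"
  proof
    fix zs assume "zs \<in> (\<lambda>\<pi>. map \<pi> ys) ` ?P"
    then obtain \<pi> where "\<pi> permutes set ys" and "zs = map \<pi> ys"
      by auto
    then show "zs \<in> permutations_of_set (set ys)"
      using ys permutations_of_set_image_permutes[of \<pi> "set ys"] by auto
  qed
  moreover have "card ((\<lambda>\<pi>. map \<pi> ys) ` ?P) = card (permutations_of_set (set ys))"
    by (simp add: card_image[OF inj] card_permutations)
  ultimately have "(\<lambda>\<pi>. map \<pi> ys) ` ?P = permutations_of_set (set ys)"
    by (intro card_subset_eq) auto
  moreover have "?P \<noteq> {}" and "finite ?P"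
    by (auto simp: finite_permutations intro: permutes_id)
  ultimately show ?thesis
    using map_pmf_of_set_inj[OF inj] by simp
qed

lemma prob_perm_pmf_eq:
  "measure_pmf.prob (perm_pmf N) {\<pi>. Q (map \<pi> [1..<Suc N])} =
    measure_pmf.prob (pmf_of_set (permutations_of_set {1..N})) {xs. Q xs}"
proof -
  have "set [1..<Suc N] = {1..N}"
    by auto
  then have "map_pmf (\<lambda>\<pi>. map \<pi> [1..<Suc N]) (perm_pmf N) = pmf_of_set (permutations_of_set {1..N})"
    using map_pmf_permutes_eq_permutations_of_set[of "[1..<Suc N]"]
    by (simp add: perm_pmf_def del: upt_Suc)
  then show ?thesis
    by (metis measure_map_pmf vimage_Collect_eq)
qed

lemma map_pmf_rev_permutations_of_set:
  assumes "finite A"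
  shows "map_pmf rev (pmf_of_set (permutations_of_set A)) = pmf_of_set (permutations_of_set A)"
  using assms by (simp add: map_pmf_of_set_inj inj_on_def)

lemma centred_sum_eq_sum_list:
  assumes "k \<le> N"
  shows "centred_sum x \<mu> \<pi> k = (\<Sum>v\<leftarrow>take k (map \<pi> [1..<Suc N]). x v - \<mu>)"
  using assms
  by (simp add: centred_sum_def take_map sum_list_distinct_conv_sum_set atLeastLessThanSuc_atLeastAtMost
      min_def del: upt_Suc)

lemma Max_centred_sum_ge_iff:
  assumes "finite K" and "K \<noteq> {}" and "\<And>k. k \<in> K \<Longrightarrow> k \<le> N"
  shows "c \<le> Max ((\<lambda>k. centred_sum x \<mu> \<pi> k / w k) ` K) \<longleftrightarrow>
    (\<exists>k\<in>K. c \<le> (\<Sum>v\<leftarrow>take k (map \<pi> [1..<Suc N]). x v - \<mu>) / w k)"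
  using assms by (simp add: Max_ge_iff centred_sum_eq_sum_list[where N = N] cong: bex_cong)

lemma sum_list_take_rev_centred:
  fixes y :: "'a \<Rightarrow> real"
  assumes "xs \<in> permutations_of_set A"
  shows "(\<Sum>v\<leftarrow>take i (rev xs). - y v - mean (\<lambda>v. - y v) A) =
    (\<Sum>v\<leftarrow>take (length xs - i) xs. y v - mean y A)"
proof -
  have "finite A" and "distinct xs" and set_xs: "set xs = A"
    using assms by (auto simp: permutations_of_set_def)
  then have "(\<Sum>v\<leftarrow>xs. y v - mean y A) = 0"
    by (cases "A = {}") (auto simp: sum_list_distinct_conv_sum_set sum_subtractf mean_def)
  moreover have "(\<Sum>v\<leftarrow>xs. y v - mean y A) =
      (\<Sum>v\<leftarrow>take (length xs - i) xs. y v - mean y A) + (\<Sum>v\<leftarrow>drop (length xs - i) xs. y v - mean y A)"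
    by (metis append_take_drop_id map_append sum_list_append)
  moreover have "(\<Sum>v\<leftarrow>ys. - y v - mean (\<lambda>v. - y v) A) = - (\<Sum>v\<leftarrow>ys. y v - mean y A)" for ys
    by (simp add: mean_def sum_negf uminus_sum_list_map o_def)
  ultimately show ?thesis
    by (simp add: take_rev rev_map[symmetric])
qed

lemma bex_reflect_atLeastAtMost:
  fixes n N :: nat
  assumes "n < N"
  shows "(\<exists>i\<in>{1..N-n}. P (N - i)) \<longleftrightarrow> (\<exists>k\<in>{n..N-1}. P k)"
proof
  assume "\<exists>i\<in>{1..N-n}. P (N - i)"
  then show "\<exists>k\<in>{n..N-1}. P k"
    by (auto intro!: bexI[where x = "N - _"])
next
  assume "\<exists>k\<in>{n..N-1}. P k"
  then obtain k where "k \<in> {n..N-1}" and "P k"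
    by blast
  then show "\<exists>i\<in>{1..N-n}. P (N - i)"
    using assms by (intro bexI[where x = "N - k"]) auto
qed

lemma prob_max_centred_sum_initial_le:
  fixes x :: "nat \<Rightarrow> real"
  assumes "1 \<le> n" and "n < N" and "\<epsilon> > 0" and "\<And>v. v \<in> {1..N} \<Longrightarrow> x v \<in> {lo..hi}"
  shows "measure_pmf.prob (perm_pmf N)
      {\<pi>. Max ((\<lambda>k. centred_sum x (mean x {1..N}) \<pi> k / (real N - real k)) ` {1..n})
        \<ge> real n * \<epsilon> / (real N - real n)}
    \<le> exp (- (2 * real n * \<epsilon>\<^sup>2) / ((1 - (real n - 1) / real N) * (hi - lo)\<^sup>2))"
proof -
  define q where "q = real N - real n"
  define c where "c = real n * \<epsilon> / q"
  define B where "B = real n * (q + 1) / (real N * q\<^sup>2)"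
  have "q > 0" and "real n > 0" and N_eq: "real N = real n + q"
    using assms(1,2) by (auto simp: q_def)
  have "1 - (real n - 1) / real N = (q + 1) / real N"
    using \<open>q > 0\<close> \<open>real n > 0\<close> by (simp add: N_eq field_simps)
  moreover have "c\<^sup>2 / B = real n * \<epsilon>\<^sup>2 * real N / (q + 1)"
    using \<open>q > 0\<close> \<open>real n > 0\<close> unfolding c_def B_def N_eq
    by (simp add: power_divide power_mult_distrib power2_eq_square)
  moreover have "2 * c\<^sup>2 / ((hi - lo)\<^sup>2 * B) = 2 * (c\<^sup>2 / B) / (hi - lo)\<^sup>2"
    by (simp add: mult.commute)
  ultimately have exponent: "2 * c\<^sup>2 / ((hi - lo)\<^sup>2 * B) =
      2 * real n * \<epsilon>\<^sup>2 / ((1 - (real n - 1) / real N) * (hi - lo)\<^sup>2)"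
    by simp
  let ?crossing = "deviation_crosses x {1..N} n c"
  have "{\<pi>. Max ((\<lambda>k. centred_sum x (mean x {1..N}) \<pi> k / (real N - real k)) ` {1..n}) \<ge> c} =
      {\<pi>. ?crossing (map \<pi> [1..<Suc N])}"
    using assms(1,2) by (subst Max_centred_sum_ge_iff[where N = N]) (auto simp: deviation_crosses_def)
  then have "measure_pmf.prob (perm_pmf N)
      {\<pi>. Max ((\<lambda>k. centred_sum x (mean x {1..N}) \<pi> k / (real N - real k)) ` {1..n}) \<ge> c}
    = measure_pmf.prob (pmf_of_set (permutations_of_set {1..N})) {xs. ?crossing xs}"
    using prob_perm_pmf_eq[where Q = ?crossing] by simp
  also have "\<dots> \<le> exp (- (2 * real n * \<epsilon>\<^sup>2 / ((1 - (real n - 1) / real N) * (hi - lo)\<^sup>2)))"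
    using prob_permutations_max_deviation_exp_le[of "{1..N}" n x lo hi c] assms \<open>q > 0\<close>
    unfolding exponent[symmetric] by (simp add: B_def c_def q_def)
  finally show ?thesis
    by (simp add: c_def q_def)
qed

lemma prob_max_sample_mean_ge_eq_reversed:
  fixes x :: "nat \<Rightarrow> real"
  assumes "n < N"
  shows "measure_pmf.prob (perm_pmf N)
      {\<pi>. Max ((\<lambda>k. centred_sum x (mean x {1..N}) \<pi> k / real k) ` {n..N-1}) \<ge> \<epsilon>}
    = measure_pmf.prob (pmf_of_set (permutations_of_set {1..N}))
        {xs. deviation_crosses (\<lambda>v. - x v) {1..N} (N - n) \<epsilon> xs}"
    (is "_ = measure_pmf.prob ?perms {xs. ?crossing xs}")
proof -
  let ?mean_crossing = "\<lambda>xs. \<exists>k\<in>{n..N-1}. \<epsilon> \<le> (\<Sum>v\<leftarrow>take k xs. x v - mean x {1..N}) / real k"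
  have "{\<pi>. Max ((\<lambda>k. centred_sum x (mean x {1..N}) \<pi> k / real k) ` {n..N-1}) \<ge> \<epsilon>} =
      {\<pi>. ?mean_crossing (map \<pi> [1..<Suc N])}"
    using assms by (subst Max_centred_sum_ge_iff[where N = N]) auto
  then have "measure_pmf.prob (perm_pmf N)
      {\<pi>. Max ((\<lambda>k. centred_sum x (mean x {1..N}) \<pi> k / real k) ` {n..N-1}) \<ge> \<epsilon>} =
      measure_pmf.prob (map_pmf rev ?perms) {xs. ?mean_crossing xs}"
    using prob_perm_pmf_eq[where Q = ?mean_crossing] by (simp add: map_pmf_rev_permutations_of_set)
  also have "\<dots> = measure_pmf.prob ?perms {xs. ?mean_crossing (rev xs)}"
    by (simp add: vimage_def)
  also have "\<dots> = measure_pmf.prob ?perms {xs. ?crossing xs}"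
  proof (rule measure_pmf.finite_measure_eq_AE, rule AE_pmfI)
    fix xs assume "xs \<in> set_pmf ?perms"
    then have "xs \<in> permutations_of_set {1..N}"
      by simp
    then have "rev xs \<in> permutations_of_set {1..N}" and "length xs = N"
      by (auto simp: permutations_of_set_def length_finite_permutations_of_set)
    then have "?crossing xs \<longleftrightarrow> (\<exists>i\<in>{1..N-n}. \<epsilon> \<le>
        (\<Sum>v\<leftarrow>take (N - i) (rev xs). x v - mean x {1..N}) / real (N - i))"
      using sum_list_take_rev_centred[where xs = "rev xs" and A = "{1..N}" and y = x]
      unfolding deviation_crosses_def by (intro bex_cong) (auto simp: of_nat_diff)
    also have "\<dots> \<longleftrightarrow> ?mean_crossing (rev xs)"
      using assms by (rule bex_reflect_atLeastAtMost)
    finally show "(xs \<in> {xs. ?mean_crossing (rev xs)}) = (xs \<in> {xs. ?crossing xs})"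
      by simp
  qed simp_all
  finally show ?thesis .
qed

lemma prob_max_sample_mean_deviation_le:
  fixes x :: "nat \<Rightarrow> real"
  assumes "1 \<le> n" and "n < N" and "\<epsilon> > 0" and "\<And>v. v \<in> {1..N} \<Longrightarrow> x v \<in> {lo..hi}"
  shows "measure_pmf.prob (perm_pmf N)
      {\<pi>. Max ((\<lambda>k. centred_sum x (mean x {1..N}) \<pi> k / real k) ` {n..N-1}) \<ge> \<epsilon>}
    \<le> exp (- (2 * real n * \<epsilon>\<^sup>2) / ((1 - real n / real N) * (1 + 1 / real n) * (hi - lo)\<^sup>2))"
proof -
  define q where "q = real N - real n"
  define B where "B = q * (real n + 1) / (real N * (real n)\<^sup>2)"
  have "q > 0" and "real n > 0" and N_eq: "real N = real n + q"
    using assms(1,2) by (auto simp: q_def)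
  have "(1 - real n / real N) * (1 + 1 / real n) = q * (real n + 1) / (real N * real n)"
    using \<open>q > 0\<close> \<open>real n > 0\<close> by (simp add: N_eq field_simps)
  moreover have "\<epsilon>\<^sup>2 / B = \<epsilon>\<^sup>2 * real N * (real n)\<^sup>2 / (q * (real n + 1))"
    using \<open>q > 0\<close> \<open>real n > 0\<close> unfolding B_def N_eq by simp
  moreover have "2 * \<epsilon>\<^sup>2 / ((hi - lo)\<^sup>2 * B) = 2 * (\<epsilon>\<^sup>2 / B) / (hi - lo)\<^sup>2"
    by (simp add: mult.commute)
  ultimately have exponent: "2 * \<epsilon>\<^sup>2 / ((hi - lo)\<^sup>2 * B) =
      2 * real n * \<epsilon>\<^sup>2 / ((1 - real n / real N) * (1 + 1 / real n) * (hi - lo)\<^sup>2)"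
    using \<open>real n > 0\<close> by (simp add: power2_eq_square)
  have "measure_pmf.prob (perm_pmf N)
      {\<pi>. Max ((\<lambda>k. centred_sum x (mean x {1..N}) \<pi> k / real k) ` {n..N-1}) \<ge> \<epsilon>}
    \<le> exp (- (2 * \<epsilon>\<^sup>2 / ((- lo - - hi)\<^sup>2 * B)))"
    unfolding prob_max_sample_mean_ge_eq_reversed[OF assms(2)]
    using prob_permutations_max_deviation_exp_le[of "{1..N}" "N - n" "\<lambda>v. - x v" "- hi" "- lo" \<epsilon>] assms
    by (simp add: B_def q_def of_nat_diff)
  then show ?thesis
    by (simp add: exponent[symmetric] power2_commute)
qed

theorem theorem1:
  fixes x :: "nat \<Rightarrow> real" and N n :: nat and \<epsilon> :: real
  defines "\<mu> \<equiv> (\<Sum>i=1..N. x i) / real N"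
      and "a \<equiv> Min (x ` {1..N})"
      and "b \<equiv> Max (x ` {1..N})"
  assumes "2 \<le> N" and "1 \<le> n" and "n < N" and "\<epsilon> > 0"
  shows "measure_pmf.prob (perm_pmf N)
           {\<pi>. Max ((\<lambda>k. centred_sum x \<mu> \<pi> k / real k) ` {n..N-1}) \<ge> \<epsilon>}
         \<le> exp (- (2 * real n * \<epsilon>\<^sup>2) /
                 ((1 - real n / real N) * (1 + 1 / real n) * (b - a)\<^sup>2))
       \<and> measure_pmf.prob (perm_pmf N)
           {\<pi>. Max ((\<lambda>k. centred_sum x \<mu> \<pi> k / (real N - real k)) ` {1..n})
                 \<ge> real n * \<epsilon> / (real N - real n)}
         \<le> exp (- (2 * real n * \<epsilon>\<^sup>2) /
                 ((1 - (real n - 1) / real N) * (b - a)\<^sup>2))"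
proof -
  \<comment> \<open>the hypothesis 2 \<le> N is implied by 1 \<le> n < N\<close>
  have "\<mu> = mean x {1..N}"
    by (simp add: \<mu>_def mean_def)
  moreover have "x v \<in> {a..b}" if "v \<in> {1..N}" for v
    using that by (auto simp: a_def b_def)
  ultimately show ?thesis
    using prob_max_sample_mean_deviation_le[OF \<open>1 \<le> n\<close> \<open>n < N\<close> \<open>\<epsilon> > 0\<close>]
      prob_max_centred_sum_initial_le[OF \<open>1 \<le> n\<close> \<open>n < N\<close> \<open>\<epsilon> > 0\<close>]
    by blast
qed

end
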